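(* Let $n=2m-1$ with $m\ge1$ and let $Q$ be the $(n+1)\times(n+1)$ matrix with entries $Q_{ij}=0$ if $i+j<n+2$ and $Q_{ij}=(q-1+\delta_{i+j,n+2})q^{\frac12(n^2-n)+j-2}$ if $i+j\ge n+2$ (the quotient matrix of the opposition graph on maximal flags of $\mathrm{PG}(n,q)$ with respect to the types relative to a fixed point). For $j\in[m]$ let $$v_j=(\underbrace{0,\dots,0}_{m-j},\underbrace{q^j,\dots,q^j}_{j},\underbrace{-1,\dots,-1}_{j},\underbrace{0,\dots,0}_{m-j})^\top.$$ Then $v_j$ is an eigenvector of $Q$ with eigenvalue $-q^{(n^2-1)/2}$.
   Context: $\delta$ is the Kronecker delta; $[m]=\{1,\dots,m\}$. *)

theory Defs
  imports Complex_Main "HOL-Computational_Algebra.Primes" "Jordan_Normal_Form.Char_Poly"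
begin

text \<open>Entry Q_{ij} of the quotient matrix, with 1-based indices i, j in [n+1].\<close>
definition Q_entry :: "nat \<Rightarrow> nat \<Rightarrow> nat \<Rightarrow> nat \<Rightarrow> real" where
  "Q_entry n q i j =
     (if i + j < n + 2 then 0
      else (real q - 1 + (if i + j = n + 2 then 1 else 0)) *
           real q powi (int ((n^2 - n) div 2) + int j - 2))"

text \<open>The (n+1) x (n+1) matrix Q (JNF matrices are 0-indexed, so shift by one).\<close>
definition Q_mat :: "nat \<Rightarrow> nat \<Rightarrow> real mat" where
  "Q_mat n q = mat (n + 1) (n + 1) (\<lambda>(i, j). Q_entry n q (i + 1) (j + 1))"

text \<open>Entry k (1-based, k in [2m]) of v_j.\<close>
definition v_entry :: "nat \<Rightarrow> nat \<Rightarrow> nat \<Rightarrow> nat \<Rightarrow> real" where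
  "v_entry m q j k =
     (if m - j < k \<and> k \<le> m then real q ^ j
      else if m < k \<and> k \<le> m + j then -1
      else 0)"

definition v_vec :: "nat \<Rightarrow> nat \<Rightarrow> nat \<Rightarrow> real vec" where
  "v_vec m q j = vec (2 * m) (\<lambda>k. v_entry m q j (k + 1))"

end

theory Submission
  imports Defs
begin

(*
  With c = q^((n^2 - n)/2 - 2), row i of Q is supported on the columns k >= a := n + 2 - i
  and equals c (q - 1 + delta_ka) q^k there, so (Q w)_i = c ((q - 1) sum_{k >= a} q^k w_k + q^a w_a).
  For w = v_j this equals -c q^(m+1) (v_j)_(2m+1-a), which is the claim because
  c q^(m+1) = q^((n^2 - 1)/2). The identity is proved by downward induction on a: from a + 1
  to a the left side changes by -q^(a+1) D_a and the right side by -q^(m+1) D_(2m-a), where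
  D_a = (v_j)_(a+1) - (v_j)_a is supported on a = m - j, m, m + j with values q^j, -(q^j + 1), 1.
  The two changes agree because this support is symmetric about m, with matching weights
  q^(m-j+1) q^j = q^(m+1) and q^(m+j+1) = q^(m+1) q^j at the ends.
*)

lemma v_entry_Suc_diff:
  assumes "1 \<le> j" and "j \<le> m"
  shows "v_entry m q j (Suc a) - v_entry m q j a
       = (if a = m - j then real q ^ j else 0) - (if a = m then real q ^ j + 1 else 0)
         + (if a = m + j then 1 else 0)"
  using assms by (auto simp: v_entry_def)

lemma v_entry_Suc_diff_reflect:
  assumes "1 \<le> j" and "j \<le> m" and "a \<le> 2 * m"
  shows "real q ^ Suc a * (v_entry m q j (Suc a) - v_entry m q j a)
       = real q ^ Suc m * (v_entry m q j (Suc (2 * m - a)) - v_entry m q j (2 * m - a))"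
proof -
  consider "a = m - j" | "a = m + j" | "a \<noteq> m - j" "a \<noteq> m + j" by blast
  then show ?thesis
  proof cases
    case 1
    then have "real q ^ a * real q ^ j = real q ^ m" using assms by (simp flip: power_add)
    then show ?thesis using 1 assms unfolding v_entry_Suc_diff[OF assms(1,2)] by auto
  next
    case 2
    then show ?thesis using assms unfolding v_entry_Suc_diff[OF assms(1,2)]
      by (auto simp: power_add)
  next
    case 3
    then show ?thesis using assms unfolding v_entry_Suc_diff[OF assms(1,2)]
      by (auto simp: algebra_simps)
  qed
qed

lemma v_entry_weighted_tail_sum:
  assumes "1 \<le> j" and "j \<le> m" and "a \<le> 2 * m + 1"
  shows "(real q - 1) * (\<Sum>k = a..2 * m. real q ^ k * v_entry m q j k) + real q ^ a * v_entry m q j a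
       = - (real q ^ Suc m * v_entry m q j (2 * m + 1 - a))"
  using assms(3)
proof (induction a rule: inc_induct)
  case base
  then show ?case using assms(2) by (simp add: v_entry_def)
next
  case (step a)
  have split: "(\<Sum>k = a..2 * m. real q ^ k * v_entry m q j k)
      = real q ^ a * v_entry m q j a + (\<Sum>k = Suc a..2 * m. real q ^ k * v_entry m q j k)"
    using step.hyps by (intro sum.atLeast_Suc_atMost) simp
  have "2 * m + 1 - a = Suc (2 * m - a)" "2 * m + 1 - Suc a = 2 * m - a"
    using step.hyps by simp_all
  then show ?case
    using step.IH v_entry_Suc_diff_reflect[OF assms(1,2), of a q] step.hyps
    unfolding split by (simp add: algebra_simps)
qed

lemma Q_entry_eq:
  assumes "q \<noteq> 0"
  shows "Q_entry n q i k
       = (if i + k < n + 2 then 0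
          else real q powi (int ((n^2 - n) div 2) - 2)
               * ((real q - 1 + (if i + k = n + 2 then 1 else 0)) * real q ^ k))"
proof -
  let ?N = "int ((n^2 - n) div 2)"
  have "real q powi (?N + int k - 2) = real q powi ((?N - 2) + int k)"
    by (simp add: algebra_simps)
  also have "\<dots> = real q powi (?N - 2) * real q ^ k"
    using assms by (simp add: power_int_add)
  finally show ?thesis unfolding Q_entry_def by simp
qed

lemma Q_mat_mult_vec_nth:
  fixes f :: "nat \<Rightarrow> real"
  assumes "q \<noteq> 0" and "i \<le> n"
  defines "a \<equiv> n + 1 - i"
  shows "(Q_mat n q *\<^sub>v vec (n + 1) (\<lambda>k. f (Suc k))) $ i
       = real q powi (int ((n^2 - n) div 2) - 2)
         * ((real q - 1) * (\<Sum>k = a..n + 1. real q ^ k * f k) + real q ^ a * f a)"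
proof -
  let ?c = "real q powi (int ((n^2 - n) div 2) - 2)"
  have a: "1 \<le> a" "a \<le> n + 1" using assms(2) unfolding a_def by simp_all
  have entry: "Q_entry n q (Suc i) k
      = (if k < a then 0 else ?c * ((real q - 1 + (if k = a then 1 else 0)) * real q ^ k))" for k
    using assms(2) unfolding Q_entry_eq[OF assms(1)] a_def by auto
  have "(Q_mat n q *\<^sub>v vec (n + 1) (\<lambda>k. f (Suc k))) $ i
      = (\<Sum>k = 0..<n + 1. Q_entry n q (Suc i) (Suc k) * f (Suc k))"
    using assms(2) by (simp add: Q_mat_def mult_mat_vec_def scalar_prod_def)
  also have "\<dots> = (\<Sum>k = 1..n + 1. Q_entry n q (Suc i) k * f k)"
    by (rule sum.reindex_bij_witness[of _ "\<lambda>k. k - 1" Suc]) auto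
  also have "\<dots> = (\<Sum>k = a..n + 1. Q_entry n q (Suc i) k * f k)"
    using a by (intro sum.mono_neutral_right) (auto simp: entry)
  also have "\<dots> = (\<Sum>k = a..n + 1. ?c * ((real q - 1) * (real q ^ k * f k))
                                  + ?c * (if k = a then real q ^ k * f k else 0))"
    by (intro sum.cong refl) (simp add: entry ring_distribs)
  also have "\<dots> = ?c * ((real q - 1) * (\<Sum>k = a..n + 1. real q ^ k * f k) + real q ^ a * f a)"
    unfolding sum.distrib sum_distrib_left[symmetric] using a by (simp add: ring_distribs)
  finally show ?thesis .
qed

lemma Q_scale_mult_power:
  fixes x :: real
  assumes "1 \<le> m" and "x \<noteq> 0"
  shows "x powi (int (((2 * m - 1)^2 - (2 * m - 1)) div 2) - 2) * x ^ Suc m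
       = x ^ (((2 * m - 1)^2 - 1) div 2)"
proof -
  obtain t where t: "m = Suc t" using assms(1) by (cases m) auto
  have "int (((2 * m - 1)^2 - (2 * m - 1)) div 2) - 2 + int (Suc m)
      = int (((2 * m - 1)^2 - 1) div 2)"
    unfolding t by (simp add: power2_eq_square algebra_simps)
  then show ?thesis
    using assms(2) by (metis power_int_add power_int_of_nat)
qed

lemma v_vec_neq_zero:
  assumes "1 \<le> j" and "j \<le> m" and "q \<noteq> 0"
  shows "v_vec m q j \<noteq> 0\<^sub>v (2 * m)"
proof
  assume "v_vec m q j = 0\<^sub>v (2 * m)"
  then have "v_vec m q j $ (m - 1) = 0" using assms(1,2) by simp
  then show False using assms by (simp add: v_vec_def v_entry_def)
qed

lemma Q_mat_mult_v_vec:
  assumes "1 \<le> j" and "j \<le> m" and "q \<noteq> 0"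
  shows "Q_mat (2 * m - 1) q *\<^sub>v v_vec m q j
       = - (real q ^ (((2 * m - 1)^2 - 1) div 2)) \<cdot>\<^sub>v v_vec m q j"
proof -
  have m: "1 \<le> m" and dim: "2 * m - 1 + 1 = 2 * m" using assms(1,2) by simp_all
  let ?c = "real q powi (int (((2 * m - 1)^2 - (2 * m - 1)) div 2) - 2)"
  have v: "v_vec m q j = vec (2 * m - 1 + 1) (\<lambda>k. v_entry m q j (Suc k))"
    unfolding v_vec_def dim by simp
  have "(Q_mat (2 * m - 1) q *\<^sub>v v_vec m q j) $ i
      = - (real q ^ (((2 * m - 1)^2 - 1) div 2)) * v_vec m q j $ i" if i: "i < 2 * m" for i
  proof -
    have "(Q_mat (2 * m - 1) q *\<^sub>v v_vec m q j) $ i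
        = ?c * ((real q - 1) * (\<Sum>k = 2 * m - i..2 * m. real q ^ k * v_entry m q j k)
                + real q ^ (2 * m - i) * v_entry m q j (2 * m - i))"
      using Q_mat_mult_vec_nth[OF assms(3), of i "2 * m - 1"] i unfolding v dim by simp
    also have "\<dots> = - (?c * real q ^ Suc m) * v_entry m q j (Suc i)"
      using v_entry_weighted_tail_sum[OF assms(1,2), of "2 * m - i" q] i by simp
    also have "\<dots> = - (real q ^ (((2 * m - 1)^2 - 1) div 2)) * v_vec m q j $ i"
      using Q_scale_mult_power[OF m, of "real q"] assms(3) i by (simp add: v_vec_def)
    finally show ?thesis .
  qed
  then show ?thesis
    using m by (intro eq_vecI) (simp_all add: Q_mat_def v_vec_def)
qed

theorem mainTheorem4:
  fixes m j q :: nat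
  assumes "m \<ge> 1"
    and "j \<in> {1..m}"
    and "\<exists>p k. prime p \<and> k \<ge> 1 \<and> q = p ^ k"
  shows "eigenvector (Q_mat (2 * m - 1) q) (v_vec m q j)
           (- (real q ^ (((2 * m - 1)^2 - 1) div 2)))"
proof -
  have q: "q \<noteq> 0" using assms(3) prime_gt_0_nat by fastforce
  have j: "1 \<le> j" "j \<le> m" using assms(2) by simp_all
  have "dim_row (Q_mat (2 * m - 1) q) = 2 * m" using assms(1) by (simp add: Q_mat_def)
  moreover have "v_vec m q j \<in> carrier_vec (2 * m)" by (simp add: v_vec_def)
  ultimately show ?thesis
    unfolding eigenvector_def using v_vec_neq_zero[OF j q] Q_mat_mult_v_vec[OF j q] by simp
qed

end
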